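(* Let $n\ge 1$ and consider the continuous-time networked SAIR(S) system: for each $i\in\{1,\dots,n\}$, \begin{align*} \dot{s}_{i}(t)&=-\beta_{i} s_{i}(t) \sum_{j=1}^n W_{ij}\big( a_{j}(t)+ p_{j}(t)\big)+\delta_{i} r_{i}(t),\\ \dot{a}_{i}(t)&=q\beta_{i} s_{i}(t) \sum_{j=1}^n W_{ij}\big( a_{j}(t)+ p_{j}(t)\big)-\sigma_{i} a_{i}(t)-\kappa_{i}a_{i}(t),\\ \dot{p}_{i}(t)&=(1-q)\beta_{i} s_{i}(t) \sum_{j=1}^n W_{ij}\big( a_{j}(t)+ p_{j}(t)\big)+\sigma_{i} a_{i}(t)-\gamma_{i} p_{i}(t),\\ \dot{r}_{i}(t)&=\kappa_{i} a_{i}(t)+\gamma_{i} p_{i}(t)-\delta_{i} r_{i}(t), \end{align*} where for all $i,j\in\{1,\dots,n\}$ we have $\beta_i,\gamma_i,\delta_i,\sigma_i,\kappa_i,W_{ij}\ge 0$ and $0\le q\le 1$. Suppose that $s_i(0),a_i(0),p_i(0),r_i(0)\in[0,1]$ and $s_i(0)+a_i(0)+p_i(0)+r_i(0)=1$ for all $i$. Then for all $t\ge 0$ and all $i\in\{1,\dots,n\}$, $s_i(t),a_i(t),p_i(t),r_i(t)\in[0,1]$ and $s_i(t)+a_i(t)+p_i(t)+r_i(t)=1$.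
   Context: The variables $s_i,a_i,p_i,r_i$ are the proportions of subpopulation $i$ that are susceptible, asymptomatic-infected, symptomatic-infected and recovered; $W=[W_{ij}]$ is the adjacency matrix of the interconnection network; $\beta_i$ is the transmission rate, $\sigma_i$ the asymptomatic-to-symptomatic progression rate, $\kappa_i,\gamma_i$ the recovery rates of asymptomatic and symptomatic infected, $\delta_i$ the rate of loss of immunity, and $q$ the proportion of new infections that are asymptomatic. *)

theory Defs
  imports "HOL-Analysis.Analysis"
begin

end

theory Submission
  imports Defs
begin

(*
  Adding the four equations of a node shows that its total s + a + p + r has zero
  derivative, so it stays equal to 1. Nonnegativity comes from a quasi-positivity
  estimate: if all shares are at least -\<eta> (with 0 < \<eta> \<le> 1) and one of them equals -\<eta>,
  then its rate is at least -L\<eta> for a constant L depending only on the parameters.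
  Adding \<epsilon> e^((L+1)t) to every share turns this into strict increase at every zero,
  so the shifted shares stay positive, and \<epsilon> can be taken arbitrarily small.
*)

lemma first_nonpositive_time:
  fixes y :: "'k \<Rightarrow> real \<Rightarrow> real"
  assumes "finite K"
    and cont: "\<And>k. k \<in> K \<Longrightarrow> continuous_on {0..T} (y k)"
    and "k \<in> K" "t \<in> {0..T}" "y k t \<le> 0"
  obtains t\<^sub>0 k\<^sub>0 where "t\<^sub>0 \<in> {0..T}" "k\<^sub>0 \<in> K" "y k\<^sub>0 t\<^sub>0 \<le> 0"
    "\<And>j t. j \<in> K \<Longrightarrow> 0 \<le> t \<Longrightarrow> t < t\<^sub>0 \<Longrightarrow> 0 < y j t"
proof -
  define A where "A = (\<Union>j\<in>K. {0..T} \<inter> y j -` {..0})"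
  have "t \<in> A"
    using assms(3-5) by (auto simp: A_def)
  have "bdd_below A"
    by (auto simp: A_def intro!: bdd_belowI[of _ 0])
  moreover have "closed A"
    unfolding A_def using assms(1) cont
    by (intro closed_UN) (auto intro!: continuous_closed_preimage)
  ultimately have "Inf A \<in> A"
    using \<open>t \<in> A\<close> by (intro closed_contains_Inf) auto
  moreover have "0 < y j t" if "j \<in> K" "0 \<le> t" "t < Inf A" for j t
  proof (rule ccontr)
    assume "\<not> 0 < y j t"
    then have "t \<in> A"
      using that \<open>Inf A \<in> A\<close> by (auto simp: A_def not_less)
    then show False
      using cInf_lower[OF _ \<open>bdd_below A\<close>] that(3) by fastforce
  qed
  ultimately show thesis
    using that by (auto simp: A_def)
qed

lemma positive_if_increasing_at_zeros:
  fixes y D :: "'k \<Rightarrow> real \<Rightarrow> real"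
  assumes "finite K"
    and deriv: "\<And>k t. k \<in> K \<Longrightarrow> 0 \<le> t \<Longrightarrow> (y k has_real_derivative D k t) (at t within {0..})"
    and init: "\<And>k. k \<in> K \<Longrightarrow> 0 < y k 0"
    and increasing: "\<And>k t. k \<in> K \<Longrightarrow> 0 < t \<Longrightarrow> t \<le> T \<Longrightarrow>
      (\<forall>j\<in>K. 0 \<le> y j t) \<Longrightarrow> y k t = 0 \<Longrightarrow> 0 < D k t"
    and k: "k \<in> K" and t: "t \<in> {0..T}"
  shows "0 < y k t"
proof (rule ccontr)
  assume "\<not> 0 < y k t"
  then have "y k t \<le> 0"
    by simp
  have cont: "continuous_on {0..T} (y j)" if "j \<in> K" for j
    using DERIV_continuous_on[OF deriv[OF that]] continuous_on_subset by fastforce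
  obtain t\<^sub>0 k\<^sub>0 where t\<^sub>0: "t\<^sub>0 \<in> {0..T}" "k\<^sub>0 \<in> K" "y k\<^sub>0 t\<^sub>0 \<le> 0"
    and before: "\<And>j t. j \<in> K \<Longrightarrow> 0 \<le> t \<Longrightarrow> t < t\<^sub>0 \<Longrightarrow> 0 < y j t"
    using first_nonpositive_time[OF \<open>finite K\<close> _ k t] cont \<open>y k t \<le> 0\<close> by blast
  have "0 < t\<^sub>0"
    using t\<^sub>0 init[of k\<^sub>0] by (cases "t\<^sub>0 = 0") auto
  have nonneg: "0 \<le> y j t\<^sub>0" if j: "j \<in> K" for j
  proof (rule ccontr)
    assume "\<not> 0 \<le> y j t\<^sub>0"
    moreover have "continuous_on {0..t\<^sub>0} (y j)"
      using cont[OF j] continuous_on_subset t\<^sub>0(1) by fastforce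
    ultimately obtain x where "0 \<le> x" "x \<le> t\<^sub>0" "y j x = 0"
      using IVT2'[of "y j" t\<^sub>0 0 0] init[OF j] \<open>0 < t\<^sub>0\<close> by force
    moreover have "x \<noteq> t\<^sub>0"
      using \<open>y j x = 0\<close> \<open>\<not> 0 \<le> y j t\<^sub>0\<close> by auto
    ultimately show False
      using before[OF j, of x] by simp
  qed
  then have "y k\<^sub>0 t\<^sub>0 = 0"
    using t\<^sub>0 by (simp add: order_antisym)
  with t\<^sub>0 nonneg \<open>0 < t\<^sub>0\<close> have "0 < D k\<^sub>0 t\<^sub>0"
    by (intro increasing) auto
  then obtain d where "0 < d" and left: "\<And>h. 0 < h \<Longrightarrow> t\<^sub>0 - h \<in> {0..} \<Longrightarrow> h < d \<Longrightarrow>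
      y k\<^sub>0 (t\<^sub>0 - h) < y k\<^sub>0 t\<^sub>0"
    using has_real_derivative_pos_inc_left[OF deriv[of k\<^sub>0 t\<^sub>0]] t\<^sub>0 by auto
  define h where "h = min (d / 2) t\<^sub>0"
  have "y k\<^sub>0 (t\<^sub>0 - h) < 0"
    using left[of h] \<open>0 < d\<close> \<open>0 < t\<^sub>0\<close> \<open>y k\<^sub>0 t\<^sub>0 = 0\<close> by (simp add: h_def)
  moreover have "0 < y k\<^sub>0 (t\<^sub>0 - h)"
    using before[OF t\<^sub>0(2), of "t\<^sub>0 - h"] \<open>0 < d\<close> \<open>0 < t\<^sub>0\<close> by (simp add: h_def)
  ultimately show False
    by simp
qed

lemma nonneg_if_quasi_positive:
  fixes y D :: "'k \<Rightarrow> real \<Rightarrow> real" and L :: real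
  assumes "finite K" "0 \<le> L"
    and deriv: "\<And>k t. k \<in> K \<Longrightarrow> 0 \<le> t \<Longrightarrow> (y k has_real_derivative D k t) (at t within {0..})"
    and init: "\<And>k. k \<in> K \<Longrightarrow> 0 \<le> y k 0"
    and quasi_positive: "\<And>k t \<eta>. k \<in> K \<Longrightarrow> 0 < t \<Longrightarrow> 0 < \<eta> \<Longrightarrow> \<eta> \<le> 1 \<Longrightarrow>
      (\<forall>j\<in>K. - \<eta> \<le> y j t) \<Longrightarrow> y k t = - \<eta> \<Longrightarrow> - (L * \<eta>) \<le> D k t"
    and k: "k \<in> K" and t: "0 \<le> t"
  shows "0 \<le> y k t"
proof (rule ccontr)
  assume "\<not> 0 \<le> y k t"
  define \<mu> where "\<mu> = L + 1"
  define \<epsilon> where "\<epsilon> = min (exp (- \<mu> * t)) (- y k t / (2 * exp (\<mu> * t)))"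
  have "0 < \<epsilon>"
    using \<open>\<not> 0 \<le> y k t\<close> by (simp add: \<epsilon>_def divide_neg_pos)
  have small: "\<epsilon> * exp (\<mu> * \<tau>) \<le> 1" if "\<tau> \<le> t" for \<tau>
  proof -
    have "\<epsilon> * exp (\<mu> * \<tau>) \<le> exp (- \<mu> * t) * exp (\<mu> * t)"
      using that \<open>0 < \<epsilon>\<close> \<open>0 \<le> L\<close> by (intro mult_mono) (auto simp: \<epsilon>_def \<mu>_def)
    then show ?thesis
      by (simp add: exp_minus field_simps)
  qed
  have shifted_pos: "0 < y k t + \<epsilon> * exp (\<mu> * t)"
  proof (rule positive_if_increasing_at_zeros[where y = "\<lambda>j \<tau>. y j \<tau> + \<epsilon> * exp (\<mu> * \<tau>)"
        and D = "\<lambda>j \<tau>. D j \<tau> + \<epsilon> * exp (\<mu> * \<tau>) * \<mu>" and T = t])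
    fix j \<tau> assume "j \<in> K" "0 < \<tau>" "\<tau> \<le> t"
      and "\<forall>i\<in>K. 0 \<le> y i \<tau> + \<epsilon> * exp (\<mu> * \<tau>)" "y j \<tau> + \<epsilon> * exp (\<mu> * \<tau>) = 0"
    moreover have "0 < \<epsilon> * exp (\<mu> * \<tau>)"
      using \<open>0 < \<epsilon>\<close> by simp
    ultimately have "- (L * (\<epsilon> * exp (\<mu> * \<tau>))) \<le> D j \<tau>"
      using small by (intro quasi_positive) (auto simp: add_eq_0_iff2 add.commute)
    then show "0 < D j \<tau> + \<epsilon> * exp (\<mu> * \<tau>) * \<mu>"
      using \<open>0 < \<epsilon> * exp (\<mu> * \<tau>)\<close> by (simp add: \<mu>_def algebra_simps)
  qed (use assms \<open>0 < \<epsilon>\<close> in \<open>auto intro!: derivative_eq_intros add_nonneg_pos\<close>)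
  have "\<epsilon> * exp (\<mu> * t) \<le> - y k t / (2 * exp (\<mu> * t)) * exp (\<mu> * t)"
    unfolding \<epsilon>_def by (intro mult_right_mono) auto
  also have "\<dots> = - y k t / 2"
    by simp
  finally show False
    using shifted_pos \<open>\<not> 0 \<le> y k t\<close> by linarith
qed

lemma mult_ge_minus_neg_parts:
  fixes x y \<xi> \<eta> X Y :: real
  assumes "- \<xi> \<le> x" "x \<le> X" "- \<eta> \<le> y" "y \<le> Y" "0 \<le> \<xi>" "0 \<le> \<eta>" "0 \<le> X" "0 \<le> Y"
  shows "- (\<xi> * Y + \<eta> * X) \<le> x * y"
proof -
  have "0 \<le> \<xi> * Y" "0 \<le> \<eta> * X"
    using assms by simp_all
  consider "0 \<le> x" "0 \<le> y" | "0 \<le> x" "y < 0" | "x < 0" "0 \<le> y" | "x < 0" "y < 0"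
    by linarith
  then show ?thesis
  proof cases
    case 1
    then have "0 \<le> x * y"
      by simp
    then show ?thesis
      using \<open>0 \<le> \<xi> * Y\<close> \<open>0 \<le> \<eta> * X\<close> by linarith
  next
    case 2
    then have "x * - y \<le> X * \<eta>"
      using assms by (intro mult_mono) auto
    then show ?thesis
      using \<open>0 \<le> \<xi> * Y\<close> by (simp add: mult.commute)
  next
    case 3
    then have "- x * y \<le> \<xi> * Y"
      using assms by (intro mult_mono) auto
    then show ?thesis
      using \<open>0 \<le> \<eta> * X\<close> by simp
  next
    case 4
    then have "0 < x * y"
      by (simp add: mult_neg_neg)
    then show ?thesis
      using \<open>0 \<le> \<xi> * Y\<close> \<open>0 \<le> \<eta> * X\<close> by linarith
  qed
qed

lemma scaled_ge_minus:
  fixes \<theta> x c :: real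
  assumes "0 \<le> \<theta>" "\<theta> \<le> 1" "- c \<le> x" "0 \<le> c"
  shows "- c \<le> \<theta> * x"
proof (cases "0 \<le> x")
  case True
  then show ?thesis
    using assms mult_nonneg_nonneg[of \<theta> x] by linarith
next
  case False
  then have "x \<le> \<theta> * x"
    using assms(2) by (simp add: mult_le_cancel_right1)
  then show ?thesis
    using assms(3) by linarith
qed

datatype compartment = Susceptible | Asymptomatic | Symptomatic | Recovered

lemma UNIV_compartment: "UNIV = {Susceptible, Asymptomatic, Symptomatic, Recovered}"
  using compartment.exhaust by auto

instance compartment :: finite
  by standard (simp add: UNIV_compartment)

locale sair_network =
  fixes n :: nat
    and s a p r :: "nat \<Rightarrow> real \<Rightarrow> real"
    and W :: "nat \<Rightarrow> nat \<Rightarrow> real"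
    and \<beta> \<gamma> \<delta> \<sigma> \<kappa> :: "nat \<Rightarrow> real"
    and q :: real
  assumes params: "\<And>i. i \<in> {1..n} \<Longrightarrow> \<beta> i \<ge> 0 \<and> \<gamma> i \<ge> 0 \<and> \<delta> i \<ge> 0 \<and> \<sigma> i \<ge> 0 \<and> \<kappa> i \<ge> 0"
    and Wnn: "\<And>i j. i \<in> {1..n} \<Longrightarrow> j \<in> {1..n} \<Longrightarrow> W i j \<ge> 0"
    and q: "0 \<le> q" "q \<le> 1"
    and ds: "\<And>i t. i \<in> {1..n} \<Longrightarrow> t \<ge> 0 \<Longrightarrow>
      (s i has_real_derivative
        (- \<beta> i * s i t * (\<Sum>j=1..n. W i j * (a j t + p j t)) + \<delta> i * r i t)) (at t within {0..})"
    and da: "\<And>i t. i \<in> {1..n} \<Longrightarrow> t \<ge> 0 \<Longrightarrow>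
      (a i has_real_derivative
        (q * \<beta> i * s i t * (\<Sum>j=1..n. W i j * (a j t + p j t)) - \<sigma> i * a i t - \<kappa> i * a i t)) (at t within {0..})"
    and dp: "\<And>i t. i \<in> {1..n} \<Longrightarrow> t \<ge> 0 \<Longrightarrow>
      (p i has_real_derivative
        ((1 - q) * \<beta> i * s i t * (\<Sum>j=1..n. W i j * (a j t + p j t)) + \<sigma> i * a i t - \<gamma> i * p i t)) (at t within {0..})"
    and dr: "\<And>i t. i \<in> {1..n} \<Longrightarrow> t \<ge> 0 \<Longrightarrow>
      (r i has_real_derivative
        (\<kappa> i * a i t + \<gamma> i * p i t - \<delta> i * r i t)) (at t within {0..})"
begin

definition force :: "nat \<Rightarrow> real \<Rightarrow> real"
  where "force i t = (\<Sum>j=1..n. W i j * (a j t + p j t))"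

definition share :: "nat \<Rightarrow> compartment \<Rightarrow> real \<Rightarrow> real"
  where "share i c = (case c of
      Susceptible \<Rightarrow> s i | Asymptomatic \<Rightarrow> a i | Symptomatic \<Rightarrow> p i | Recovered \<Rightarrow> r i)"

definition rate :: "nat \<Rightarrow> compartment \<Rightarrow> real \<Rightarrow> real"
  where "rate i c t = (case c of
      Susceptible \<Rightarrow> - \<beta> i * s i t * force i t + \<delta> i * r i t
    | Asymptomatic \<Rightarrow> q * \<beta> i * s i t * force i t - \<sigma> i * a i t - \<kappa> i * a i t
    | Symptomatic \<Rightarrow> (1 - q) * \<beta> i * s i t * force i t + \<sigma> i * a i t - \<gamma> i * p i t
    | Recovered \<Rightarrow> \<kappa> i * a i t + \<gamma> i * p i t - \<delta> i * r i t)"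

definition contact_weight :: "nat \<Rightarrow> real"
  where "contact_weight i = (\<Sum>j=1..n. W i j)"

definition decay_bound :: "nat \<Rightarrow> real"
  where "decay_bound i = \<delta> i + \<sigma> i + \<kappa> i + \<gamma> i + 11 * \<beta> i * contact_weight i"

lemma has_real_derivative_share:
  assumes "i \<in> {1..n}" "0 \<le> t"
  shows "(share i c has_real_derivative rate i c t) (at t within {0..})"
  using ds[OF assms] da[OF assms] dp[OF assms] dr[OF assms]
  by (cases c) (simp_all add: share_def rate_def force_def)

lemma total_share_constant:
  assumes i: "i \<in> {1..n}" and t: "0 \<le> t"
  shows "s i t + a i t + p i t + r i t = s i 0 + a i 0 + p i 0 + r i 0"
proof -
  have "((\<lambda>t. s i t + a i t + p i t + r i t) has_real_derivative 0) (at \<tau> within {0..})"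
    if "\<tau> \<in> {0..}" for \<tau>
    using that i
    by (intro DERIV_cong[OF DERIV_add[OF DERIV_add[OF DERIV_add[OF ds da] dp] dr]])
      (auto simp: algebra_simps)
  then have "\<exists>c. \<forall>\<tau>\<in>{0..}. s i \<tau> + a i \<tau> + p i \<tau> + r i \<tau> = c"
    by (intro has_field_derivative_zero_constant) auto
  then obtain c where "\<forall>\<tau>\<in>{0..}. s i \<tau> + a i \<tau> + p i \<tau> + r i \<tau> = c" ..
  then show ?thesis
    using t by simp
qed

lemma contact_weight_nonneg: "i \<in> {1..n} \<Longrightarrow> 0 \<le> contact_weight i"
  unfolding contact_weight_def using Wnn by (intro sum_nonneg) auto

lemma decay_bound_nonneg: "i \<in> {1..n} \<Longrightarrow> 0 \<le> decay_bound i"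
  using params[of i] contact_weight_nonneg[of i] by (simp add: decay_bound_def)

context
  fixes t \<eta> :: real
  assumes \<eta>: "0 < \<eta>" "\<eta> \<le> 1"
    and total: "\<And>j. j \<in> {1..n} \<Longrightarrow> s j t + a j t + p j t + r j t = 1"
    and lower: "\<And>j c. j \<in> {1..n} \<Longrightarrow> - \<eta> \<le> share j c t"
begin

lemma share_lower:
  assumes "j \<in> {1..n}"
  shows "- \<eta> \<le> s j t" "- \<eta> \<le> a j t" "- \<eta> \<le> p j t" "- \<eta> \<le> r j t"
  using lower[OF assms, of Susceptible] lower[OF assms, of Asymptomatic]
    lower[OF assms, of Symptomatic] lower[OF assms, of Recovered]
  by (simp_all add: share_def)

lemma force_bounds:
  assumes i: "i \<in> {1..n}"
  shows "- (2 * \<eta> * contact_weight i) \<le> force i t" "force i t \<le> 3 * contact_weight i"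
proof -
  have infected: "- (2 * \<eta>) \<le> a j t + p j t" "a j t + p j t \<le> 3" if "j \<in> {1..n}" for j
    using share_lower[OF that] total[OF that] \<eta> by linarith+
  have "- (2 * \<eta> * contact_weight i) = (\<Sum>j=1..n. W i j * (- 2 * \<eta>))"
    unfolding contact_weight_def sum_distrib_right[symmetric] by simp
  also have "\<dots> \<le> force i t"
    unfolding force_def using infected Wnn[OF i] by (intro sum_mono mult_left_mono) auto
  finally show "- (2 * \<eta> * contact_weight i) \<le> force i t" .
  have "force i t \<le> (\<Sum>j=1..n. W i j * 3)"
    unfolding force_def using infected Wnn[OF i] by (intro sum_mono mult_left_mono) auto
  also have "\<dots> = 3 * contact_weight i"
    unfolding contact_weight_def sum_distrib_right[symmetric] by simp
  finally show "force i t \<le> 3 * contact_weight i" .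
qed

lemma infection_lower_bound:
  assumes i: "i \<in> {1..n}"
  shows "- (11 * \<beta> i * contact_weight i * \<eta>) \<le> \<beta> i * (s i t * force i t)"
proof -
  have "s i t \<le> 4"
    using share_lower[OF i] total[OF i] \<eta> by linarith
  then have "- (\<eta> * (3 * contact_weight i) + 2 * \<eta> * contact_weight i * 4) \<le> s i t * force i t"
    using share_lower[OF i] force_bounds[OF i] \<eta> contact_weight_nonneg[OF i]
    by (intro mult_ge_minus_neg_parts) auto
  then show ?thesis
    using mult_left_mono[of _ _ "\<beta> i"] params[OF i] by (fastforce simp: algebra_simps)
qed

lemma susceptible_outflow_lower_bound:
  assumes i: "i \<in> {1..n}"
  shows "- (2 * \<beta> i * contact_weight i * \<eta>) \<le> \<beta> i * \<eta> * force i t"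
proof -
  have "\<eta> * contact_weight i \<le> contact_weight i"
    using \<eta> contact_weight_nonneg[OF i] by (simp add: mult_left_le_one_le)
  then have "- 2 * contact_weight i \<le> force i t"
    using force_bounds(1)[OF i] by linarith
  then have "\<beta> i * \<eta> * (- 2 * contact_weight i) \<le> \<beta> i * \<eta> * force i t"
    using params[OF i] \<eta> by (intro mult_left_mono) auto
  then show ?thesis
    by (simp add: algebra_simps)
qed

lemma rate_quasi_positive:
  assumes i: "i \<in> {1..n}" and at_boundary: "share i c t = - \<eta>"
  shows "- (decay_bound i * \<eta>) \<le> rate i c t"
proof -
  have par: "0 \<le> \<beta> i" "0 \<le> \<gamma> i" "0 \<le> \<delta> i" "0 \<le> \<sigma> i" "0 \<le> \<kappa> i"
    using params[OF i] by auto
  have nonneg: "0 \<le> \<delta> i * \<eta>" "0 \<le> \<sigma> i * \<eta>" "0 \<le> \<kappa> i * \<eta>" "0 \<le> \<gamma> i * \<eta>"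
    "0 \<le> \<beta> i * contact_weight i * \<eta>"
    using par \<eta> contact_weight_nonneg[OF i] by simp_all
  have damped: "- (\<delta> i * \<eta>) \<le> \<delta> i * r i t" "- (\<sigma> i * \<eta>) \<le> \<sigma> i * a i t"
    "- (\<kappa> i * \<eta>) \<le> \<kappa> i * a i t" "- (\<gamma> i * \<eta>) \<le> \<gamma> i * p i t"
    using share_lower[OF i] par by (simp_all add: mult_left_mono[of "- \<eta>", simplified])
  have scaled_infection: "- (11 * \<beta> i * contact_weight i * \<eta>) \<le> \<theta> * (\<beta> i * (s i t * force i t))"
    if "0 \<le> \<theta>" "\<theta> \<le> 1" for \<theta>
    by (rule scaled_ge_minus[OF that infection_lower_bound[OF i]]) (use nonneg(5) in linarith)
  have decay_bound: "decay_bound i * \<eta> =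
      \<delta> i * \<eta> + \<sigma> i * \<eta> + \<kappa> i * \<eta> + \<gamma> i * \<eta> + 11 * (\<beta> i * contact_weight i * \<eta>)"
    by (simp add: decay_bound_def algebra_simps)
  show ?thesis
  proof (cases c)
    case Susceptible
    then have "rate i c t = \<beta> i * \<eta> * force i t + \<delta> i * r i t"
      using at_boundary by (simp add: share_def rate_def)
    then show ?thesis
      using susceptible_outflow_lower_bound[OF i] decay_bound damped nonneg by linarith
  next
    case Asymptomatic
    then have "rate i c t = q * (\<beta> i * (s i t * force i t)) + \<sigma> i * \<eta> + \<kappa> i * \<eta>"
      using at_boundary by (simp add: share_def rate_def algebra_simps)
    then show ?thesis
      using scaled_infection[of q] q decay_bound nonneg by linarith
  next
    case Symptomatic
    then have "rate i c t = (1 - q) * (\<beta> i * (s i t * force i t)) + \<sigma> i * a i t + \<gamma> i * \<eta>"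
      using at_boundary by (simp add: share_def rate_def algebra_simps)
    then show ?thesis
      using scaled_infection[of "1 - q"] q decay_bound damped nonneg by linarith
  next
    case Recovered
    then have "rate i c t = \<kappa> i * a i t + \<gamma> i * p i t + \<delta> i * \<eta>"
      using at_boundary by (simp add: share_def rate_def)
    then show ?thesis
      using decay_bound damped nonneg by linarith
  qed
qed

end

lemma share_nonneg:
  assumes total0: "\<And>i. i \<in> {1..n} \<Longrightarrow> s i 0 + a i 0 + p i 0 + r i 0 = 1"
    and init: "\<And>i c. i \<in> {1..n} \<Longrightarrow> 0 \<le> share i c 0"
    and i: "i \<in> {1..n}" and t: "0 \<le> t"
  shows "0 \<le> share i c t"
proof -
  define L where "L = (\<Sum>i=1..n. decay_bound i)"
  have total: "s j \<tau> + a j \<tau> + p j \<tau> + r j \<tau> = 1" if "j \<in> {1..n}" "0 \<le> \<tau>" for j \<tau>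
    using total_share_constant[OF that] total0[OF that(1)] by simp
  have "0 \<le> case_prod share (i, c) t"
  proof (rule nonneg_if_quasi_positive[where y = "case_prod share" and D = "case_prod rate"
        and K = "{1..n} \<times> UNIV" and L = L])
    fix k \<tau> \<eta>
    assume "k \<in> {1..n} \<times> UNIV" "0 < \<tau>" "0 < \<eta>" "\<eta> \<le> 1"
      and "\<forall>j\<in>{1..n} \<times> UNIV. - \<eta> \<le> case_prod share j \<tau>" "case_prod share k \<tau> = - \<eta>"
    moreover obtain j c' where "k = (j, c')"
      by fastforce
    ultimately have "- (decay_bound j * \<eta>) \<le> rate j c' \<tau>" "decay_bound j * \<eta> \<le> L * \<eta>"
      using total decay_bound_nonneg
      by (auto intro!: rate_quasi_positive mult_right_mono member_le_sum simp: L_def)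
    then show "- (L * \<eta>) \<le> case_prod rate k \<tau>"
      using \<open>k = (j, c')\<close> by simp
  next
    fix k :: "nat \<times> compartment" and \<tau> :: real
    assume "k \<in> {1..n} \<times> UNIV" "0 \<le> \<tau>"
    then show "(case_prod share k has_real_derivative case_prod rate k \<tau>) (at \<tau> within {0..})"
      by (auto intro: has_real_derivative_share)
  next
    fix k :: "nat \<times> compartment"
    assume "k \<in> {1..n} \<times> UNIV"
    then show "0 \<le> case_prod share k 0"
      using init by auto
  qed (use i t decay_bound_nonneg in \<open>auto simp: L_def intro: sum_nonneg\<close>)
  then show ?thesis
    by simp
qed

end

theorem lemma1:
  fixes n :: nat
    and s a p r :: "nat \<Rightarrow> real \<Rightarrow> real"
    and W :: "nat \<Rightarrow> nat \<Rightarrow> real"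
    and \<beta> \<gamma> \<delta> \<sigma> \<kappa> :: "nat \<Rightarrow> real"
    and q :: real
  assumes n: "n \<ge> 1"
    and params: "\<And>i. i \<in> {1..n} \<Longrightarrow> \<beta> i \<ge> 0 \<and> \<gamma> i \<ge> 0 \<and> \<delta> i \<ge> 0 \<and> \<sigma> i \<ge> 0 \<and> \<kappa> i \<ge> 0"
    and Wnn: "\<And>i j. i \<in> {1..n} \<Longrightarrow> j \<in> {1..n} \<Longrightarrow> W i j \<ge> 0"
    and q: "0 \<le> q" "q \<le> 1"
    and ds: "\<And>i t. i \<in> {1..n} \<Longrightarrow> t \<ge> 0 \<Longrightarrow>
      (s i has_real_derivative
        (- \<beta> i * s i t * (\<Sum>j=1..n. W i j * (a j t + p j t)) + \<delta> i * r i t)) (at t within {0..})"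
    and da: "\<And>i t. i \<in> {1..n} \<Longrightarrow> t \<ge> 0 \<Longrightarrow>
      (a i has_real_derivative
        (q * \<beta> i * s i t * (\<Sum>j=1..n. W i j * (a j t + p j t)) - \<sigma> i * a i t - \<kappa> i * a i t)) (at t within {0..})"
    and dp: "\<And>i t. i \<in> {1..n} \<Longrightarrow> t \<ge> 0 \<Longrightarrow>
      (p i has_real_derivative
        ((1 - q) * \<beta> i * s i t * (\<Sum>j=1..n. W i j * (a j t + p j t)) + \<sigma> i * a i t - \<gamma> i * p i t)) (at t within {0..})"
    and dr: "\<And>i t. i \<in> {1..n} \<Longrightarrow> t \<ge> 0 \<Longrightarrow>
      (r i has_real_derivative
        (\<kappa> i * a i t + \<gamma> i * p i t - \<delta> i * r i t)) (at t within {0..})"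
    and init: "\<And>i. i \<in> {1..n} \<Longrightarrow>
      s i 0 \<in> {0..1} \<and> a i 0 \<in> {0..1} \<and> p i 0 \<in> {0..1} \<and> r i 0 \<in> {0..1} \<and>
      s i 0 + a i 0 + p i 0 + r i 0 = 1"
  shows "\<forall>t \<ge> 0. \<forall>i \<in> {1..n}.
      s i t \<in> {0..1} \<and> a i t \<in> {0..1} \<and> p i t \<in> {0..1} \<and> r i t \<in> {0..1} \<and>
      s i t + a i t + p i t + r i t = 1"
proof -
  interpret sair_network n s a p r W \<beta> \<gamma> \<delta> \<sigma> \<kappa> q
    by unfold_locales (fact params Wnn q ds da dp dr)+
  have total0: "s i 0 + a i 0 + p i 0 + r i 0 = 1" if "i \<in> {1..n}" for i
    using init[OF that] by simp
  have shares_nonneg: "0 \<le> share i c t" if "i \<in> {1..n}" "0 \<le> t" for i c t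
  proof (rule share_nonneg[OF total0 _ that])
    show "0 \<le> share j c' 0" if "j \<in> {1..n}" for j c'
      using init[OF that] by (cases c') (simp_all add: share_def)
  qed
  show ?thesis
  proof (intro allI impI ballI)
    fix t :: real and i
    assume "0 \<le> t" "i \<in> {1..n}"
    then have "0 \<le> s i t" "0 \<le> a i t" "0 \<le> p i t" "0 \<le> r i t"
      using shares_nonneg[where c = Susceptible] shares_nonneg[where c = Asymptomatic]
        shares_nonneg[where c = Symptomatic] shares_nonneg[where c = Recovered]
      by (simp_all add: share_def)
    moreover have "s i t + a i t + p i t + r i t = 1"
      using total_share_constant[OF \<open>i \<in> {1..n}\<close> \<open>0 \<le> t\<close>] total0[OF \<open>i \<in> {1..n}\<close>] by simp
    ultimately show "s i t \<in> {0..1} \<and> a i t \<in> {0..1} \<and> p i t \<in> {0..1} \<and> r i t \<in> {0..1} \<and>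
        s i t + a i t + p i t + r i t = 1"
      by auto
  qed
qed

end
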